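(* Let $(E,\|\cdot\|)$ be a non-archimedean Banach space over $K$ which has a finite maximal orthogonal subset, and let $X=\{a_1,\dots,a_m\}\subseteq E$ be a maximal orthogonal subset. Put $t_i=\|a_i\|$ for $i=1,\dots,m$. Then there exists a $K$-linear isometry $$T:E\to ((K^{\vee})^m,|\cdot|_{t_1}\times\cdots\times|\cdot|_{t_m})$$ such that $T(a_i)=e_i$ for $i=1,\dots,m$, where $e_1,\dots,e_m\in (K^\vee)^m$ are the canonical unit vectors.
   Context: $K$ is a complete non-archimedean non-trivially valued field which is not spherically complete. $K^{\vee}$ is a fixed spherically complete valued field which is an immediate extension of $K$ (for each nonzero $x\in K^\vee$ there is $d\in K$ with $|x-d|<|x|$). For $t>0$, $(K^\vee,|\cdot|_t)$ denotes $K^\vee$ regarded as a $K$-normed space with norm $|x|_t=t|x|$, and $((K^{\vee})^m,|\cdot|_{t_1}\times\cdots\times|\cdot|_{t_m})$ is the direct sum of $(K^\vee,|\cdot|_{t_i})$ with the max norm $\|(x_1,\dots,x_m)\|=\max_i t_i|x_i|$. A subset $X\subseteq E\setminus\{0\}$ is orthogonal if $\|\sum_i\lambda_ix_i\|=\max_i\|\lambda_ix_i\|$ for all finite $\{x_1,\dots,x_n\}\subseteq X$ and $\lambda_i\in K$. *)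

theory Defs
  imports Complex_Main
begin

definition nonarch_abs :: "('a::field \<Rightarrow> real) \<Rightarrow> bool" where
  "nonarch_abs v \<longleftrightarrow> (\<forall>x. 0 \<le> v x) \<and> (\<forall>x. v x = 0 \<longleftrightarrow> x = 0) \<and>
     (\<forall>x y. v (x * y) = v x * v y) \<and> (\<forall>x y. v (x + y) \<le> max (v x) (v y))"

definition nontrivial_abs :: "('a::field \<Rightarrow> real) \<Rightarrow> bool" where
  "nontrivial_abs v \<longleftrightarrow> (\<exists>x. v x \<noteq> 0 \<and> v x \<noteq> 1)"

definition complete_wrt :: "('a::ab_group_add \<Rightarrow> real) \<Rightarrow> bool" where
  "complete_wrt v \<longleftrightarrow> (\<forall>f :: nat \<Rightarrow> 'a.
     (\<forall>\<epsilon>>0. \<exists>N. \<forall>n\<ge>N. \<forall>k\<ge>N. v (f n - f k) < \<epsilon>) \<longrightarrow>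
     (\<exists>l. \<forall>\<epsilon>>0. \<exists>N. \<forall>n\<ge>N. v (f n - l) < \<epsilon>))"

definition cball_wrt :: "('a::ab_group_add \<Rightarrow> real) \<Rightarrow> 'a \<Rightarrow> real \<Rightarrow> 'a set" where
  "cball_wrt v c r = {y. v (y - c) \<le> r}"

definition sph_complete :: "('a::ab_group_add \<Rightarrow> real) \<Rightarrow> bool" where
  "sph_complete v \<longleftrightarrow> (\<forall>\<C> :: 'a set set.
     \<C> \<noteq> {} \<and> (\<forall>B\<in>\<C>. \<exists>c r. 0 < r \<and> B = cball_wrt v c r) \<and>
     (\<forall>B\<in>\<C>. \<forall>B'\<in>\<C>. B \<subseteq> B' \<or> B' \<subseteq> B) \<longrightarrow> \<Inter>\<C> \<noteq> {})"

definition immediate_ext :: "('k::field \<Rightarrow> real) \<Rightarrow> ('v::field \<Rightarrow> real) \<Rightarrow> ('k \<Rightarrow> 'v) \<Rightarrow> bool" where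
  "immediate_ext absK absV \<iota> \<longleftrightarrow>
     (\<forall>x y. \<iota> (x + y) = \<iota> x + \<iota> y) \<and> (\<forall>x y. \<iota> (x * y) = \<iota> x * \<iota> y) \<and> \<iota> 1 = 1 \<and>
     (\<forall>x. absV (\<iota> x) = absK x) \<and>
     (\<forall>x. x \<noteq> 0 \<longrightarrow> (\<exists>d. absV (x - \<iota> d) < absV x))"

definition nonarch_norm :: "('k::field \<Rightarrow> real) \<Rightarrow> ('k \<Rightarrow> 'e::ab_group_add \<Rightarrow> 'e) \<Rightarrow> ('e \<Rightarrow> real) \<Rightarrow> bool" where
  "nonarch_norm absK smul nE \<longleftrightarrow> (\<forall>x. 0 \<le> nE x) \<and> (\<forall>x. nE x = 0 \<longleftrightarrow> x = 0) \<and>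
     (\<forall>c x. nE (smul c x) = absK c * nE x) \<and> (\<forall>x y. nE (x + y) \<le> max (nE x) (nE y))"

definition orthogonal_set :: "('k \<Rightarrow> 'e::ab_group_add \<Rightarrow> 'e) \<Rightarrow> ('e \<Rightarrow> real) \<Rightarrow> 'e set \<Rightarrow> bool" where
  "orthogonal_set smul nE X \<longleftrightarrow> X \<subseteq> - {0} \<and>
     (\<forall>F lam. finite F \<and> F \<subseteq> X \<longrightarrow>
        nE (\<Sum>x\<in>F. smul (lam x) x) = Max (insert 0 ((\<lambda>x. nE (smul (lam x) x)) ` F)))"

definition max_orthogonal_set :: "('k \<Rightarrow> 'e::ab_group_add \<Rightarrow> 'e) \<Rightarrow> ('e \<Rightarrow> real) \<Rightarrow> 'e set \<Rightarrow> bool" where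
  "max_orthogonal_set smul nE X \<longleftrightarrow> orthogonal_set smul nE X \<and>
     (\<forall>Y. orthogonal_set smul nE Y \<and> X \<subseteq> Y \<longrightarrow> Y = X)"

text \<open>Norm of (K^v)^m with |.|_{t_1} x ... x |.|_{t_m}; elements of (K^v)^m are
  functions nat => 'v vanishing outside {..<m}.\<close>
definition prod_norm :: "('v \<Rightarrow> real) \<Rightarrow> (nat \<Rightarrow> real) \<Rightarrow> nat \<Rightarrow> (nat \<Rightarrow> 'v) \<Rightarrow> real" where
  "prod_norm absV t m y = Max (insert 0 ((\<lambda>i. t i * absV (y i)) ` {..<m}))"

end

theory Submission
  imports Defs "HOL-Library.Function_Algebras"
begin

(* Orthogonality of X = {a_1, ..., a_m} makes sum l_i a_i \<mapsto> (\<iota> l_i)_i an isometry T_0 from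
   span X into (K^v)^m, and maximality of X says that E is immediate over span X: every z \<noteq> 0
   has some d \<in> span X with \<parallel>z - d\<parallel> < \<parallel>z\<parallel>.  T_0 is extended by Zorn's lemma over graphs of
   partial linear isometries.  To add a new vector x to such a graph M, note that the balls
   around y_f with radius \<parallel>x - f\<parallel>, (f, y_f) \<in> M, meet pairwise, so spherical completeness of K^v
   (applied coordinatewise) gives a common point y.  Sending x to y is isometric because by
   immediacy no f is a closest point to x: for (g, y_g) \<in> M with \<parallel>x - g\<parallel> < \<parallel>x - f\<parallel> the isosceles
   property gives \<parallel>y_f - y_g\<parallel> = \<parallel>f - g\<parallel> = \<parallel>x - f\<parallel>, while \<parallel>y - y_g\<parallel> \<le> \<parallel>x - g\<parallel> < \<parallel>x - f\<parallel>,
   hence \<parallel>y - y_f\<parallel> \<ge> \<parallel>x - f\<parallel>. *)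

section \<open>Ultrametric functions\<close>

locale ultranorm =
  fixes N :: "'a::ab_group_add \<Rightarrow> real"
  assumes ultra: "N (x + y) \<le> max (N x) (N y)"
    and minus: "N (- x) = N x"
begin

lemma diff_commute: "N (x - y) = N (y - x)"
  using minus[of "x - y"] by simp

lemma diff_le: "N (x - z) \<le> max (N (x - y)) (N (y - z))"
  using ultra[of "x - y" "y - z"] by simp

lemma add_eq_right:
  assumes "N x < N y"
  shows "N (x + y) = N y"
proof -
  have "N y \<le> max (N (x + y)) (N x)"
    using ultra[of "x + y" "- x"] minus[of x] by simp
  with assms have "N y \<le> N (x + y)"
    by linarith
  moreover have "N (x + y) \<le> N y"
    using ultra[of x y] assms by simp
  ultimately show ?thesis
    by simp
qed

lemma add_eq_max_if_le:
  assumes "N x \<le> N (x + y)"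
  shows "N (x + y) = max (N x) (N y)"
proof (cases "N y \<le> N x")
  case True
  with assms ultra[of x y] show ?thesis
    by simp
next
  case False
  then show ?thesis
    using add_eq_right[of x y] by simp
qed

end

lemma nonarch_absD:
  assumes "nonarch_abs v"
  shows "v x \<ge> 0" "v x = 0 \<longleftrightarrow> x = 0" "v (x * y) = v x * v y"
    "v (x + y) \<le> max (v x) (v y)"
  using assms unfolding nonarch_abs_def by auto

lemma nonarch_abs_one:
  assumes "nonarch_abs v"
  shows "v 1 = 1"
proof -
  have "v 1 = v 1 * v 1" "v 1 \<noteq> 0"
    using nonarch_absD(3)[OF assms, of 1 1] nonarch_absD(2)[OF assms, of 1] by simp_all
  then show ?thesis
    by (metis mult_cancel_right1)
qed

lemma nonarch_abs_minus:
  assumes "nonarch_abs v"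
  shows "v (- x) = v x"
proof -
  have "v (- 1) * v (- 1) = 1"
    using nonarch_absD(3)[OF assms, of "- 1" "- 1"] nonarch_abs_one[OF assms] by simp
  then have "(v (- 1) - 1) * (v (- 1) + 1) = 0"
    by (simp add: algebra_simps)
  moreover have "v (- 1) + 1 > 0"
    using nonarch_absD(1)[OF assms, of "- 1"] by linarith
  ultimately have "v (- 1) = 1"
    by simp
  then show ?thesis
    using nonarch_absD(3)[OF assms, of "- 1" x] by simp
qed

lemma ultranorm_nonarch_abs: "nonarch_abs v \<Longrightarrow> ultranorm v"
  by unfold_locales (simp_all add: nonarch_absD nonarch_abs_minus)

lemma prod_norm_le_iff:
  "0 \<le> r \<Longrightarrow> prod_norm v t m y \<le> r \<longleftrightarrow> (\<forall>i<m. t i * v (y i) \<le> r)"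
  unfolding prod_norm_def by (subst Max_le_iff) auto

lemma prod_norm_ge: "i < m \<Longrightarrow> t i * v (y i) \<le> prod_norm v t m y"
  unfolding prod_norm_def by (rule Max_ge) auto

lemma prod_norm_nonneg: "0 \<le> prod_norm v t m y"
  unfolding prod_norm_def by (rule Max_ge) auto

lemma prod_norm_eq_0:
  assumes v: "nonarch_abs v" and "prod_norm v t m y = 0" "i < m" "0 < t i"
  shows "y i = 0"
proof -
  have "t i * v (y i) \<le> 0"
    using prod_norm_ge[OF \<open>i < m\<close>, of t v y] assms(2) by simp
  then have "v (y i) \<le> 0"
    using \<open>0 < t i\<close> by (simp add: mult_le_0_iff)
  then show ?thesis
    using nonarch_absD(1,2)[OF v, of "y i"] by simp
qed

lemma prod_norm_mult:
  assumes "nonarch_abs v"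
  shows "prod_norm v t m (\<lambda>i. c * y i) = v c * prod_norm v t m y"
proof -
  have "mono ((*) (v c))"
    using nonarch_absD(1)[OF assms] by (simp add: mono_def mult_left_mono)
  then have "v c * prod_norm v t m y = Max ((*) (v c) ` insert 0 ((\<lambda>i. t i * v (y i)) ` {..<m}))"
    unfolding prod_norm_def by (rule mono_Max_commute) auto
  then show ?thesis
    unfolding prod_norm_def image_image image_insert by (simp add: nonarch_absD(3)[OF assms] ac_simps)
qed

lemma ultranorm_prod_norm:
  assumes "nonarch_abs v" "\<And>i. 0 \<le> t i"
  shows "ultranorm (prod_norm v t m)"
proof
  fix y z :: "nat \<Rightarrow> 'a"
  show "prod_norm v t m (y + z) \<le> max (prod_norm v t m y) (prod_norm v t m z)"
  proof (subst prod_norm_le_iff)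
    show "0 \<le> max (prod_norm v t m y) (prod_norm v t m z)"
      by (simp add: le_max_iff_disj prod_norm_nonneg)
    show "\<forall>i<m. t i * v ((y + z) i) \<le> max (prod_norm v t m y) (prod_norm v t m z)"
    proof (intro allI impI)
      fix i assume "i < m"
      have "t i * v ((y + z) i) \<le> t i * max (v (y i)) (v (z i))"
        using nonarch_absD(4)[OF assms(1), of "y i" "z i"] assms(2)[of i]
        by (simp add: mult_left_mono)
      also have "\<dots> = max (t i * v (y i)) (t i * v (z i))"
        using assms(2)[of i] by (simp add: max_mult_distrib_left)
      also have "\<dots> \<le> max (prod_norm v t m y) (prod_norm v t m z)"
        using prod_norm_ge[OF \<open>i < m\<close>] by (meson max.mono)
      finally show "t i * v ((y + z) i) \<le> max (prod_norm v t m y) (prod_norm v t m z)" .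
    qed
  qed
  show "prod_norm v t m (- y) = prod_norm v t m y"
    unfolding prod_norm_def by (simp add: nonarch_abs_minus[OF assms(1)])
qed

section \<open>Maximal orthogonal sets\<close>

lemma orthogonal_setD:
  assumes "orthogonal_set smul nE X"
  shows "x \<in> X \<Longrightarrow> x \<noteq> 0"
    and "finite F \<Longrightarrow> F \<subseteq> X \<Longrightarrow>
      nE (\<Sum>x\<in>F. smul (lam x) x) = Max (insert 0 ((\<lambda>x. nE (smul (lam x) x)) ` F))"
  using assms unfolding orthogonal_set_def by auto

locale nonarch_space = vector_space smul
  for smul :: "'k::field \<Rightarrow> 'e::ab_group_add \<Rightarrow> 'e" +
  fixes absK :: "'k \<Rightarrow> real" and nE :: "'e \<Rightarrow> real"
  assumes K_abs: "nonarch_abs absK" and E_norm: "nonarch_norm absK smul nE"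
begin

lemma norm_nonneg: "0 \<le> nE x"
  and norm_eq_0_iff [simp]: "nE x = 0 \<longleftrightarrow> x = 0"
  and norm_scale: "nE (smul c x) = absK c * nE x"
  using E_norm unfolding nonarch_norm_def by auto

lemma norm_zero [simp]: "nE 0 = 0"
  by simp

sublocale norm: ultranorm nE
proof
  show "nE (x + y) \<le> max (nE x) (nE y)" for x y
    using E_norm unfolding nonarch_norm_def by blast
  show "nE (- x) = nE x" for x
    using norm_scale[of "- 1" x] nonarch_abs_minus[OF K_abs, of 1] nonarch_abs_one[OF K_abs]
    by simp
qed

lemma orthogonal_set_insert:
  assumes orth: "orthogonal_set smul nE X" and "z \<noteq> 0"
    and far: "\<And>d. d \<in> span X \<Longrightarrow> nE z \<le> nE (z - d)"
  shows "orthogonal_set smul nE (insert z X)"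
  unfolding orthogonal_set_def
proof (intro conjI allI impI)
  show "insert z X \<subseteq> - {0}"
    using assms(2) orth unfolding orthogonal_set_def by auto
next
  fix F lam assume F: "finite F \<and> F \<subseteq> insert z X"
  let ?f = "\<lambda>x. nE (smul (lam x) x)"
  note orth_sum = orthogonal_setD(2)[OF orth, of _ lam]
  show "nE (\<Sum>x\<in>F. smul (lam x) x) = Max (insert 0 (?f ` F))"
  proof (cases "z \<in> F")
    case False
    with F show ?thesis
      by (intro orth_sum) auto
  next
    case True
    define F' where "F' = F - {z}"
    define c where "c = lam z"
    define d where "d = (\<Sum>x\<in>F'. smul (lam x) x)"
    have F': "finite F'" "F' \<subseteq> X" "F = insert z F'" "z \<notin> F'"
      using F True unfolding F'_def by auto
    have "insert 0 (?f ` F) = insert (?f z) (insert 0 (?f ` F'))"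
      using F'(3) by auto
    then have max_F: "Max (insert 0 (?f ` F)) = max (?f z) (Max (insert 0 (?f ` F')))"
      using F'(1) by (simp only:) (rule Max_insert; simp)
    have d_span: "d \<in> span X"
      unfolding d_def using F'(2) by (intro span_sum span_scale span_base) auto
    have "nE (smul c z + d) = max (nE (smul c z)) (nE d)"
    proof (cases "c = 0")
      case True
      then show ?thesis
        using norm_nonneg[of d] by simp
    next
      case False
      have "smul c z + d = smul c (z - smul (- inverse c) d)"
        using False by (simp add: scale_right_distrib)
      moreover have "nE z \<le> nE (z - smul (- inverse c) d)"
        by (intro far span_scale d_span)
      ultimately have "nE (smul c z) \<le> nE (smul c z + d)"
        by (simp add: norm_scale mult_left_mono nonarch_absD(1)[OF K_abs])
      then show ?thesis
        by (rule norm.add_eq_max_if_le)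
    qed
    moreover have "(\<Sum>x\<in>F. smul (lam x) x) = smul c z + d"
      using F' unfolding c_def d_def by simp
    ultimately show ?thesis
      using orth_sum[OF F'(1,2)] max_F unfolding c_def d_def by simp
  qed
qed

lemma max_orthogonal_set_immediate:
  assumes "max_orthogonal_set smul nE X" "z \<noteq> 0"
  shows "\<exists>d\<in>span X. nE (z - d) < nE z"
proof (rule ccontr)
  assume no_approx: "\<not> ?thesis"
  then have "orthogonal_set smul nE (insert z X)"
    using assms orthogonal_set_insert[of X z] unfolding max_orthogonal_set_def by (meson not_le)
  then have "z \<in> X"
    using assms(1) unfolding max_orthogonal_set_def by blast
  then show False
    using no_approx assms(2) span_base[of z X] norm_nonneg[of z] by force
qed

end

section \<open>Spherical completeness\<close>

lemma sph_complete_pairwise_cballs: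
  fixes v :: "'a::field \<Rightarrow> real" and c :: "'i \<Rightarrow> 'a"
  assumes sc: "sph_complete v" and v: "nonarch_abs v" and "I \<noteq> {}"
    and r_pos: "\<And>j. j \<in> I \<Longrightarrow> 0 < r j"
    and meet: "\<And>j k. j \<in> I \<Longrightarrow> k \<in> I \<Longrightarrow> v (c j - c k) \<le> max (r j) (r k)"
  shows "\<exists>w. \<forall>j\<in>I. v (w - c j) \<le> r j"
proof -
  interpret ultranorm v
    using v by (rule ultranorm_nonarch_abs)
  have nested: "cball_wrt v (c k) (r k) \<subseteq> cball_wrt v (c j) (r j)"
    if "j \<in> I" "k \<in> I" "r k \<le> r j" for j k
  proof
    fix u assume "u \<in> cball_wrt v (c k) (r k)"
    then have "v (u - c k) \<le> r j"
      using that(3) unfolding cball_wrt_def by simp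
    moreover have "v (c k - c j) \<le> r j"
      using meet[OF that(2,1)] that(3) by simp
    ultimately show "u \<in> cball_wrt v (c j) (r j)"
      using diff_le[of u "c j" "c k"] unfolding cball_wrt_def by simp
  qed
  let ?C = "(\<lambda>j. cball_wrt v (c j) (r j)) ` I"
  have "B \<subseteq> B' \<or> B' \<subseteq> B" if B: "B \<in> ?C" "B' \<in> ?C" for B B'
  proof -
    obtain j k where "j \<in> I" "k \<in> I" "B = cball_wrt v (c j) (r j)" "B' = cball_wrt v (c k) (r k)"
      using B by blast
    then show ?thesis
      using nested[of j k] nested[of k j] by (cases "r k \<le> r j") auto
  qed
  moreover have "\<forall>B\<in>?C. \<exists>c r. 0 < r \<and> B = cball_wrt v c r"
    using r_pos by (auto intro!: exI)
  ultimately have "?C \<noteq> {} \<and> (\<forall>B\<in>?C. \<exists>c r. 0 < r \<and> B = cball_wrt v c r) \<and>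
      (\<forall>B\<in>?C. \<forall>B'\<in>?C. B \<subseteq> B' \<or> B' \<subseteq> B)"
    using \<open>I \<noteq> {}\<close> by simp
  then have "\<Inter>?C \<noteq> {}"
    by (rule sc[unfolded sph_complete_def, rule_format])
  then obtain w where "w \<in> \<Inter>?C"
    by blast
  then show ?thesis
    unfolding cball_wrt_def by blast
qed

lemma prod_sph_complete_pairwise_cballs:
  fixes v :: "'a::field \<Rightarrow> real" and c :: "'i \<Rightarrow> nat \<Rightarrow> 'a"
  assumes sc: "sph_complete v" and v: "nonarch_abs v" and "I \<noteq> {}"
    and t_pos: "\<And>i. i < m \<Longrightarrow> 0 < t i" and r_pos: "\<And>j. j \<in> I \<Longrightarrow> 0 < r j"
    and meet: "\<And>j k. j \<in> I \<Longrightarrow> k \<in> I \<Longrightarrow> prod_norm v t m (c j - c k) \<le> max (r j) (r k)"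
  shows "\<exists>w. (\<forall>i\<ge>m. w i = 0) \<and> (\<forall>j\<in>I. prod_norm v t m (w - c j) \<le> r j)"
proof -
  have coordinate: "\<exists>w. \<forall>j\<in>I. v (w - c j i) \<le> r j / t i" if "i < m" for i
  proof (rule sph_complete_pairwise_cballs[OF sc v \<open>I \<noteq> {}\<close>])
    show "0 < r j / t i" if "j \<in> I" for j
      using r_pos[OF that] t_pos[OF \<open>i < m\<close>] by simp
    fix j k assume "j \<in> I" "k \<in> I"
    have "t i * v (c j i - c k i) \<le> max (r j) (r k)"
      using prod_norm_ge[OF \<open>i < m\<close>, of t v "c j - c k"] meet[OF \<open>j \<in> I\<close> \<open>k \<in> I\<close>] by simp
    then have "v (c j i - c k i) \<le> max (r j) (r k) / t i"
      using t_pos[OF \<open>i < m\<close>] by (simp add: pos_le_divide_eq mult.commute)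
    then show "v (c j i - c k i) \<le> max (r j / t i) (r k / t i)"
      using t_pos[OF \<open>i < m\<close>] by (simp add: max_divide_distrib_right)
  qed
  have "\<forall>i. \<exists>w. i < m \<longrightarrow> (\<forall>j\<in>I. v (w - c j i) \<le> r j / t i)"
    using coordinate by blast
  then obtain w where w: "\<forall>i. i < m \<longrightarrow> (\<forall>j\<in>I. v (w i - c j i) \<le> r j / t i)"
    by (rule choice[THEN exE])
  define w' where "w' i = (if i < m then w i else 0)" for i
  have "prod_norm v t m (w' - c j) \<le> r j" if "j \<in> I" for j
  proof (subst prod_norm_le_iff)
    show "0 \<le> r j"
      using r_pos[OF that] by simp
    show "\<forall>i<m. t i * v ((w' - c j) i) \<le> r j"
      using w that t_pos by (simp add: w'_def pos_le_divide_eq mult.commute)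
  qed
  then show ?thesis
    by (intro exI[of _ w']) (simp add: w'_def)
qed

section \<open>Extending the isometry from the span of the basis\<close>

locale basis_isometry = nonarch_space smul absK nE
  for smul :: "'k::field \<Rightarrow> 'e::ab_group_add \<Rightarrow> 'e" and absK nE +
  fixes absV :: "'v::field \<Rightarrow> real" and \<iota> :: "'k \<Rightarrow> 'v" and a :: "nat \<Rightarrow> 'e" and m :: nat
  assumes V_abs: "nonarch_abs absV" and V_sc: "sph_complete absV"
    and iota_add: "\<iota> (x + y) = \<iota> x + \<iota> y" and iota_mult: "\<iota> (x * y) = \<iota> x * \<iota> y"
    and iota_one [simp]: "\<iota> 1 = 1" and abs_iota: "absV (\<iota> x) = absK x"
    and a_inj: "inj_on a {..<m}" and a_max: "max_orthogonal_set smul nE (a ` {..<m})"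
begin

abbreviation pn :: "(nat \<Rightarrow> 'v) \<Rightarrow> real" where
  "pn \<equiv> prod_norm absV (\<lambda>i. nE (a i)) m"

lemma iota_zero [simp]: "\<iota> 0 = 0"
proof -
  have "\<iota> 0 + \<iota> 0 = \<iota> 0 + 0"
    using iota_add[of 0 0] by simp
  then show ?thesis
    by (rule add_left_imp_eq)
qed

lemma iota_minus [simp]: "\<iota> (- x) = - \<iota> x"
proof -
  have "\<iota> x + \<iota> (- x) = 0"
    using iota_add[of x "- x"] by simp
  then show ?thesis
    by (simp add: minus_unique)
qed

lemma a_orth: "orthogonal_set smul nE (a ` {..<m})"
  using a_max unfolding max_orthogonal_set_def by blast

lemma norm_basis_pos:
  assumes "i < m"
  shows "0 < nE (a i)"
proof -
  have "a i \<noteq> 0"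
    using orthogonal_setD(1)[OF a_orth] assms by simp
  then show ?thesis
    using norm_nonneg[of "a i"] by (simp add: order_less_le)
qed

sublocale pn: ultranorm pn
  by (rule ultranorm_prod_norm[OF V_abs norm_nonneg])

lemma pn_scale: "pn (\<lambda>i. \<iota> c * y i) = absK c * pn y"
  using prod_norm_mult[OF V_abs] by (simp add: abs_iota)

definition lincomb :: "(nat \<Rightarrow> 'k) \<Rightarrow> 'e" where
  "lincomb l = (\<Sum>i<m. smul (l i) (a i))"

definition coords :: "(nat \<Rightarrow> 'k) \<Rightarrow> nat \<Rightarrow> 'v" where
  "coords l = (\<lambda>i. if i < m then \<iota> (l i) else 0)"

definition basis_graph :: "('e \<times> (nat \<Rightarrow> 'v)) set" where
  "basis_graph = range (\<lambda>l. (lincomb l, coords l))"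

lemma lincomb_eq_sum: "lincomb l = (\<Sum>x\<in>a ` {..<m}. smul (l (the_inv_into {..<m} a x)) x)"
  unfolding lincomb_def sum.reindex[OF a_inj]
  by (intro sum.cong) (simp_all add: the_inv_into_f_f[OF a_inj])

lemma span_basis: "span (a ` {..<m}) = range lincomb"
proof -
  have "(\<Sum>x\<in>a ` {..<m}. smul (u x) x) = lincomb (u \<circ> a)" for u
    unfolding lincomb_def by (simp add: sum.reindex[OF a_inj])
  then have "span (a ` {..<m}) = range (\<lambda>u. lincomb (u \<circ> a))"
    unfolding span_finite[OF finite_imageI[OF finite_lessThan]] by simp
  also have "\<dots> = range lincomb"
  proof
    show "range lincomb \<subseteq> range (\<lambda>u. lincomb (u \<circ> a))"
    proof
      fix x assume "x \<in> range lincomb"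
      then obtain l where "x = lincomb l"
        by blast
      also have "\<dots> = lincomb ((\<lambda>x. l (the_inv_into {..<m} a x)) \<circ> a)"
        unfolding lincomb_def by (intro sum.cong) (simp_all add: the_inv_into_f_f[OF a_inj])
      finally show "x \<in> range (\<lambda>u. lincomb (u \<circ> a))"
        by blast
    qed
  qed blast
  finally show ?thesis .
qed

lemma norm_lincomb: "nE (lincomb l) = pn (coords l)"
proof -
  let ?lam = "\<lambda>x. l (the_inv_into {..<m} a x)"
  have "nE (lincomb l) = Max (insert 0 ((\<lambda>x. nE (smul (?lam x) x)) ` a ` {..<m}))"
    unfolding lincomb_eq_sum using orthogonal_setD(2)[OF a_orth] by simp
  also have "(\<lambda>x. nE (smul (?lam x) x)) ` a ` {..<m} = (\<lambda>i. nE (a i) * absV (coords l i)) ` {..<m}"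
    unfolding image_image
    by (intro image_cong refl) (simp add: the_inv_into_f_f[OF a_inj] coords_def norm_scale abs_iota)
  finally show ?thesis
    unfolding prod_norm_def .
qed

definition isometry_graph :: "('e \<times> (nat \<Rightarrow> 'v)) set \<Rightarrow> bool" where
  "isometry_graph G \<longleftrightarrow>
     (\<forall>x y x' y'. (x, y) \<in> G \<longrightarrow> (x', y') \<in> G \<longrightarrow> (x + x', y + y') \<in> G) \<and>
     (\<forall>c x y. (x, y) \<in> G \<longrightarrow> (smul c x, \<lambda>i. \<iota> c * y i) \<in> G) \<and>
     (\<forall>x y. (x, y) \<in> G \<longrightarrow> pn y = nE x \<and> (\<forall>i\<ge>m. y i = 0))"

lemma isometry_graphI:
  assumes "\<And>x y x' y'. (x, y) \<in> G \<Longrightarrow> (x', y') \<in> G \<Longrightarrow> (x + x', y + y') \<in> G"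
    and "\<And>c x y. (x, y) \<in> G \<Longrightarrow> (smul c x, \<lambda>i. \<iota> c * y i) \<in> G"
    and "\<And>x y. (x, y) \<in> G \<Longrightarrow> pn y = nE x"
    and "\<And>x y i. (x, y) \<in> G \<Longrightarrow> m \<le> i \<Longrightarrow> y i = 0"
  shows "isometry_graph G"
  using assms unfolding isometry_graph_def by blast

context
  fixes G assumes G: "isometry_graph G"
begin

lemma isometry_graph_add: "(x, y) \<in> G \<Longrightarrow> (x', y') \<in> G \<Longrightarrow> (x + x', y + y') \<in> G"
  and isometry_graph_scale: "(x, y) \<in> G \<Longrightarrow> (smul c x, \<lambda>i. \<iota> c * y i) \<in> G"
  and isometry_graph_norm: "(x, y) \<in> G \<Longrightarrow> pn y = nE x"
  and isometry_graph_support: "(x, y) \<in> G \<Longrightarrow> m \<le> i \<Longrightarrow> y i = 0"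
  using G unfolding isometry_graph_def by blast+

lemma isometry_graph_diff:
  assumes "(x, y) \<in> G" "(x', y') \<in> G"
  shows "(x - x', y - y') \<in> G"
proof -
  have "(x + smul (- 1) x', y + (\<lambda>i. \<iota> (- 1) * y' i)) \<in> G"
    using assms by (intro isometry_graph_add isometry_graph_scale)
  moreover have "y + (\<lambda>i. \<iota> (- 1) * y' i) = y - y'"
    by (simp add: fun_eq_iff)
  ultimately show ?thesis
    by simp
qed

lemma isometry_graph_dist: "(x, y) \<in> G \<Longrightarrow> (x', y') \<in> G \<Longrightarrow> pn (y - y') = nE (x - x')"
  by (rule isometry_graph_norm[OF isometry_graph_diff])

lemma isometry_graph_unique:
  assumes "(x, y) \<in> G" "(x, y') \<in> G"
  shows "y = y'"
proof
  fix i
  have "pn (y - y') = 0"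
    using isometry_graph_dist[OF assms] by simp
  show "y i = y' i"
  proof (cases "i < m")
    case True
    have "(y - y') i = 0"
      using prod_norm_eq_0[OF V_abs \<open>pn (y - y') = 0\<close> True norm_basis_pos[OF True]] .
    then show ?thesis
      by simp
  next
    case False
    then show ?thesis
      using isometry_graph_support[OF assms(1)] isometry_graph_support[OF assms(2)] by simp
  qed
qed

end

lemma isometry_graph_basis_graph: "isometry_graph basis_graph"
proof (rule isometry_graphI)
  show "(x + x', y + y') \<in> basis_graph"
    if xy: "(x, y) \<in> basis_graph" "(x', y') \<in> basis_graph" for x y x' y'
  proof -
    obtain l l' where "x = lincomb l" "y = coords l" "x' = lincomb l'" "y' = coords l'"
      using xy unfolding basis_graph_def by auto
    moreover have "lincomb l + lincomb l' = lincomb (\<lambda>i. l i + l' i)"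
      unfolding lincomb_def by (simp add: scale_left_distrib sum.distrib)
    moreover have "coords l + coords l' = coords (\<lambda>i. l i + l' i)"
      unfolding coords_def by (auto simp: iota_add)
    ultimately show ?thesis
      unfolding basis_graph_def by auto
  qed
  show "(smul c x, \<lambda>i. \<iota> c * y i) \<in> basis_graph" if xy: "(x, y) \<in> basis_graph" for c x y
  proof -
    obtain l where "x = lincomb l" "y = coords l"
      using xy unfolding basis_graph_def by auto
    moreover have "smul c (lincomb l) = lincomb (\<lambda>i. c * l i)"
      unfolding lincomb_def by (simp add: scale_sum_right)
    moreover have "(\<lambda>i. \<iota> c * coords l i) = coords (\<lambda>i. c * l i)"
      unfolding coords_def by (auto simp: iota_mult)
    ultimately show ?thesis
      unfolding basis_graph_def by auto
  qed
  show "pn y = nE x" if "(x, y) \<in> basis_graph" for x y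
    using that norm_lincomb unfolding basis_graph_def by auto
  show "y i = 0" if "(x, y) \<in> basis_graph" "m \<le> i" for x y i
    using that unfolding basis_graph_def coords_def by auto
qed

lemma zero_in_basis_graph: "(0, 0) \<in> basis_graph"
proof -
  have "(lincomb (\<lambda>_. 0), coords (\<lambda>_. 0)) \<in> basis_graph"
    unfolding basis_graph_def by (rule rangeI)
  moreover have "lincomb (\<lambda>_. 0) = 0" "coords (\<lambda>_. 0) = 0"
    unfolding lincomb_def coords_def by (simp_all add: fun_eq_iff)
  ultimately show ?thesis
    by simp
qed

lemma basis_in_basis_graph: "i < m \<Longrightarrow> (a i, \<lambda>j. if j = i then 1 else 0) \<in> basis_graph"
proof -
  assume "i < m"
  have "(lincomb (\<lambda>j. if j = i then 1 else 0), coords (\<lambda>j. if j = i then 1 else 0)) \<in> basis_graph"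
    unfolding basis_graph_def by (rule rangeI)
  moreover have "lincomb (\<lambda>j. if j = i then 1 else 0) = a i"
    unfolding lincomb_def using \<open>i < m\<close> by (simp add: if_distrib[of "\<lambda>c. smul c _"] cong: if_cong)
  moreover have "coords (\<lambda>j. if j = i then 1 else 0) = (\<lambda>j. if j = i then 1 else 0)"
    unfolding coords_def using \<open>i < m\<close> by auto
  ultimately show ?thesis
    by simp
qed

lemma isometry_graph_Union:
  assumes graphs: "\<And>G. G \<in> C \<Longrightarrow> isometry_graph G"
    and chain: "\<And>G H. G \<in> C \<Longrightarrow> H \<in> C \<Longrightarrow> G \<subseteq> H \<or> H \<subseteq> G"
  shows "isometry_graph (\<Union>C)"
proof (rule isometry_graphI)
  show "(x + x', y + y') \<in> \<Union>C" if xy: "(x, y) \<in> \<Union>C" "(x', y') \<in> \<Union>C" for x y x' y'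
  proof -
    obtain G H where "G \<in> C" "H \<in> C" "(x, y) \<in> G" "(x', y') \<in> H"
      using xy by blast
    then show ?thesis
      using chain[of G H] isometry_graph_add[OF graphs[of G]] isometry_graph_add[OF graphs[of H]]
      by blast
  qed
  show "(smul c x, \<lambda>i. \<iota> c * y i) \<in> \<Union>C" if "(x, y) \<in> \<Union>C" for c x y
    using that isometry_graph_scale[OF graphs] by blast
  show "pn y = nE x" if "(x, y) \<in> \<Union>C" for x y
    using that isometry_graph_norm[OF graphs] by blast
  show "y i = 0" if "(x, y) \<in> \<Union>C" "m \<le> i" for x y i
    using that isometry_graph_support[OF graphs] by blast
qed

lemma exists_closer_graph_point:
  assumes M: "isometry_graph M" "basis_graph \<subseteq> M" and f: "(f, yf) \<in> M" and "x \<noteq> f"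
  shows "\<exists>g yg. (g, yg) \<in> M \<and> nE (x - g) < nE (x - f)"
proof -
  obtain d where "d \<in> span (a ` {..<m})" and approx: "nE (x - f - d) < nE (x - f)"
    using max_orthogonal_set_immediate[OF a_max] \<open>x \<noteq> f\<close> by force
  then obtain l where "d = lincomb l"
    unfolding span_basis by blast
  then have "(d, coords l) \<in> M"
    using M(2) unfolding basis_graph_def by blast
  then have "(f + d, yf + coords l) \<in> M"
    by (rule isometry_graph_add[OF M(1) f])
  moreover have "nE (x - (f + d)) < nE (x - f)"
    using approx by (simp add: diff_diff_eq)
  ultimately show ?thesis
    by blast
qed

lemma exists_point_within_dists:
  assumes M: "isometry_graph M" "basis_graph \<subseteq> M" and x: "\<And>y. (x, y) \<notin> M"
  shows "\<exists>y. (\<forall>i\<ge>m. y i = 0) \<and> (\<forall>p\<in>M. pn (y - snd p) \<le> nE (x - fst p))"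
proof (rule prod_sph_complete_pairwise_cballs[OF V_sc V_abs])
  show "M \<noteq> {}"
    using M(2) zero_in_basis_graph by blast
  show "0 < nE (a i)" if "i < m" for i
    using norm_basis_pos[OF that] .
  show "0 < nE (x - fst p)" if "p \<in> M" for p
  proof -
    have "x - fst p \<noteq> 0"
      using x[of "snd p"] that by auto
    then show ?thesis
      using norm_nonneg[of "x - fst p"] by (simp add: order_less_le)
  qed
  show "pn (snd p - snd q) \<le> max (nE (x - fst p)) (nE (x - fst q))" if "p \<in> M" "q \<in> M" for p q
  proof -
    have "pn (snd p - snd q) = nE (fst p - fst q)"
      using isometry_graph_dist[OF M(1), of "fst p" "snd p" "fst q" "snd q"] that by simp
    also have "\<dots> \<le> max (nE (fst p - x)) (nE (x - fst q))"
      by (rule norm.diff_le)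
    finally show ?thesis
      by (simp add: norm.diff_commute[of "fst p" x])
  qed
qed

lemma exists_isometric_image:
  assumes M: "isometry_graph M" "basis_graph \<subseteq> M" and x: "\<And>y. (x, y) \<notin> M"
  shows "\<exists>y. (\<forall>i\<ge>m. y i = 0) \<and> (\<forall>(f, yf)\<in>M. pn (y - yf) = nE (x - f))"
proof -
  obtain y where y0: "\<forall>i\<ge>m. y i = 0" and y_close: "\<forall>p\<in>M. pn (y - snd p) \<le> nE (x - fst p)"
    using exists_point_within_dists[OF M x] by blast
  have y_le: "pn (y - yf) \<le> nE (x - f)" if "(f, yf) \<in> M" for f yf
    using bspec[OF y_close that] by simp
  have y_ge: "nE (x - f) \<le> pn (y - yf)" if f: "(f, yf) \<in> M" for f yf
  proof -
    obtain g yg where g: "(g, yg) \<in> M" and closer: "nE (x - g) < nE (x - f)"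
      using exists_closer_graph_point[OF M f] x[of yf] f by fastforce
    have "nE ((x - g) + (f - x)) = nE (f - x)"
      using closer by (intro norm.add_eq_right) (simp add: norm.diff_commute[of f x])
    moreover have "(x - g) + (f - x) = f - g"
      by (simp add: algebra_simps)
    ultimately have "nE (x - f) = nE (f - g)"
      by (simp add: norm.diff_commute[of f x])
    also have "\<dots> = pn (yf - yg)"
      using isometry_graph_dist[OF M(1) f g] by simp
    also have "\<dots> \<le> max (pn (y - yf)) (pn (y - yg))"
      using pn.diff_le[of yf yg y] by (simp add: pn.diff_commute[of yf y])
    finally have "nE (x - f) \<le> max (pn (y - yf)) (pn (y - yg))" .
    moreover have "pn (y - yg) < nE (x - f)"
      using y_le[OF g] closer by simp
    ultimately show ?thesis
      by (simp add: le_max_iff_disj)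
  qed
  have "pn (y - yf) = nE (x - f)" if "(f, yf) \<in> M" for f yf
    using y_le[OF that] y_ge[OF that] by (rule order_antisym)
  with y0 show ?thesis
    by (intro exI[of _ y]) auto
qed

lemma isometry_graph_extend:
  assumes M: "isometry_graph M" and y0: "\<forall>i\<ge>m. y i = 0"
    and y_iso: "\<And>f yf. (f, yf) \<in> M \<Longrightarrow> pn (y - yf) = nE (x - f)"
  shows "isometry_graph {(f + smul c x, yf + (\<lambda>i. \<iota> c * y i)) | f yf c. (f, yf) \<in> M}"
    (is "isometry_graph ?M'")
proof (rule isometry_graphI)
  have mem: "(f + smul c x, yf + (\<lambda>i. \<iota> c * y i)) \<in> ?M'" if "(f, yf) \<in> M" for f yf c
    using that by blast
  show "(p + p', q + q') \<in> ?M'" if pq: "(p, q) \<in> ?M'" "(p', q') \<in> ?M'" for p q p' q'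
  proof -
    obtain f yf c f' yf' c' where "(f, yf) \<in> M" "(f', yf') \<in> M"
      and "p = f + smul c x" "q = yf + (\<lambda>i. \<iota> c * y i)"
      and "p' = f' + smul c' x" "q' = yf' + (\<lambda>i. \<iota> c' * y i)"
      using pq by blast
    moreover have "(f + f' + smul (c + c') x, yf + yf' + (\<lambda>i. \<iota> (c + c') * y i)) \<in> ?M'"
      using calculation by (intro mem isometry_graph_add[OF M])
    ultimately show ?thesis
      by (simp add: scale_left_distrib iota_add fun_eq_iff algebra_simps)
  qed
  show "(smul k p, \<lambda>i. \<iota> k * q i) \<in> ?M'" if pq: "(p, q) \<in> ?M'" for k p q
  proof -
    obtain f yf c where "(f, yf) \<in> M" "p = f + smul c x" "q = yf + (\<lambda>i. \<iota> c * y i)"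
      using pq by blast
    moreover have "(smul k f + smul (k * c) x, (\<lambda>i. \<iota> k * yf i) + (\<lambda>i. \<iota> (k * c) * y i)) \<in> ?M'"
      using calculation by (intro mem isometry_graph_scale[OF M])
    ultimately show ?thesis
      by (simp add: scale_right_distrib iota_mult fun_eq_iff algebra_simps)
  qed
  show "pn q = nE p" if pq: "(p, q) \<in> ?M'" for p q
  proof -
    obtain f yf c where f: "(f, yf) \<in> M" and p: "p = f + smul c x" and q: "q = yf + (\<lambda>i. \<iota> c * y i)"
      using pq by blast
    show ?thesis
    proof (cases "c = 0")
      case True
      then show ?thesis
        using isometry_graph_norm[OF M f] p q by (simp flip: zero_fun_def)
    next
      case False
      define k where "k = - inverse c"
      have ck: "\<iota> c * \<iota> k = - 1"
        using False by (simp add: k_def flip: iota_mult)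
      have "p = smul c (x - smul k f)"
        using False by (simp add: p k_def scale_right_distrib add.commute)
      then have "nE p = absK c * nE (x - smul k f)"
        by (simp add: norm_scale)
      also have "\<dots> = absK c * pn (y - (\<lambda>i. \<iota> k * yf i))"
        using y_iso[OF isometry_graph_scale[OF M f]] by simp
      also have "\<dots> = pn (\<lambda>i. \<iota> c * (y - (\<lambda>i. \<iota> k * yf i)) i)"
        by (rule pn_scale[symmetric])
      also have "(\<lambda>i. \<iota> c * (y - (\<lambda>i. \<iota> k * yf i)) i) = q"
        by (simp add: q fun_eq_iff right_diff_distrib mult.assoc[symmetric] ck)
      finally show ?thesis ..
    qed
  qed
  show "q i = 0" if "(p, q) \<in> ?M'" "m \<le> i" for p q i
    using that y0 isometry_graph_support[OF M] by auto
qed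

lemma isometry_graph_proper_extension:
  assumes M: "isometry_graph M" "basis_graph \<subseteq> M" and x: "\<And>y. (x, y) \<notin> M"
  shows "\<exists>M'. isometry_graph M' \<and> M \<subset> M'"
proof -
  obtain y where y0: "\<forall>i\<ge>m. y i = 0" and y_iso: "\<And>f yf. (f, yf) \<in> M \<Longrightarrow> pn (y - yf) = nE (x - f)"
    using exists_isometric_image[OF M x] by blast
  let ?M' = "{(f + smul c x, yf + (\<lambda>i. \<iota> c * y i)) | f yf c. (f, yf) \<in> M}"
  have "M \<subseteq> ?M'"
  proof
    fix p assume "p \<in> M"
    then obtain f yf where p: "p = (f, yf)" "(f, yf) \<in> M"
      by (cases p) auto
    have "(f, yf) = (f + smul 0 x, yf + (\<lambda>i. \<iota> 0 * y i))"
      by (simp add: fun_eq_iff)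
    then show "p \<in> ?M'"
      using p by blast
  qed
  moreover have "(x, y) \<in> ?M'"
  proof -
    have "(x, y) = (0 + smul 1 x, 0 + (\<lambda>i. \<iota> 1 * y i))"
      by (simp add: fun_eq_iff)
    moreover have "(0, 0) \<in> M"
      using M(2) zero_in_basis_graph by blast
    ultimately show ?thesis
      by blast
  qed
  ultimately have "M \<subset> ?M'"
    using x by blast
  with isometry_graph_extend[OF M(1) y0 y_iso] show ?thesis
    by blast
qed

lemma exists_total_isometry_graph:
  "\<exists>M. isometry_graph M \<and> basis_graph \<subseteq> M \<and> (\<forall>x. \<exists>y. (x, y) \<in> M)"
proof -
  let ?A = "{G. isometry_graph G \<and> basis_graph \<subseteq> G}"
  have "\<exists>M\<in>?A. \<forall>G\<in>?A. M \<subseteq> G \<longrightarrow> G = M"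
  proof (rule subset_Zorn_nonempty)
    show "?A \<noteq> {}"
      using isometry_graph_basis_graph by blast
    show "\<Union>C \<in> ?A" if "C \<noteq> {}" "subset.chain ?A C" for C
    proof -
      have C: "C \<subseteq> ?A" and chain: "\<forall>G\<in>C. \<forall>H\<in>C. G \<subseteq> H \<or> H \<subseteq> G"
        using that(2) unfolding subset_chain_def by auto
      have "isometry_graph (\<Union>C)"
        by (rule isometry_graph_Union) (use C chain in auto)
      moreover have "basis_graph \<subseteq> \<Union>C"
        using C \<open>C \<noteq> {}\<close> by blast
      ultimately show ?thesis
        by blast
    qed
  qed
  then obtain M where M: "isometry_graph M" "basis_graph \<subseteq> M"
    and maximal: "\<And>G. isometry_graph G \<Longrightarrow> basis_graph \<subseteq> G \<Longrightarrow> M \<subseteq> G \<Longrightarrow> G = M"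
    by auto
  have "\<exists>y. (x, y) \<in> M" for x
  proof (rule ccontr)
    assume "\<nexists>y. (x, y) \<in> M"
    then obtain M' where "isometry_graph M'" "M \<subset> M'"
      using isometry_graph_proper_extension[OF M] by blast
    with M(2) maximal[of M'] show False
      by blast
  qed
  with M show ?thesis
    by blast
qed

lemma exists_basis_isometry:
  "\<exists>T. (\<forall>x y. T (x + y) = T x + T y) \<and> (\<forall>c x. T (smul c x) = (\<lambda>i. \<iota> c * T x i)) \<and>
     (\<forall>x i. m \<le> i \<longrightarrow> T x i = 0) \<and> (\<forall>x. pn (T x) = nE x) \<and>
     (\<forall>i<m. T (a i) = (\<lambda>j. if j = i then 1 else 0))"
proof -
  obtain M where M: "isometry_graph M" "basis_graph \<subseteq> M" and total: "\<forall>x. \<exists>y. (x, y) \<in> M"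
    using exists_total_isometry_graph by blast
  from total obtain T where T: "\<And>x. (x, T x) \<in> M"
    by metis
  have T_eq: "T x = y" if "(x, y) \<in> M" for x y
    by (rule isometry_graph_unique[OF M(1) T that])
  show ?thesis
  proof (intro exI[of _ T] conjI allI impI)
    show "T (x + y) = T x + T y" for x y
      using T_eq isometry_graph_add[OF M(1) T T] by blast
    show "T (smul c x) = (\<lambda>i. \<iota> c * T x i)" for c x
      using T_eq isometry_graph_scale[OF M(1) T] by blast
    show "T x i = 0" if "m \<le> i" for x i
      using isometry_graph_support[OF M(1) T that] .
    show "pn (T x) = nE x" for x
      using isometry_graph_norm[OF M(1) T] .
    show "T (a i) = (\<lambda>j. if j = i then 1 else 0)" if "i < m" for i
      using T_eq basis_in_basis_graph[OF that] M(2) by blast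
  qed
qed

end

theorem mainTheorem1:
  fixes absK :: "'k::field \<Rightarrow> real" and absV :: "'v::field \<Rightarrow> real"
    and \<iota> :: "'k \<Rightarrow> 'v"
    and smul :: "'k \<Rightarrow> 'e::ab_group_add \<Rightarrow> 'e" and nE :: "'e \<Rightarrow> real"
    and a :: "nat \<Rightarrow> 'e" and m :: nat
  assumes K_abs: "nonarch_abs absK" and K_nontriv: "nontrivial_abs absK"
    and K_complete: "complete_wrt absK" and K_not_sc: "\<not> sph_complete absK"
    and V_abs: "nonarch_abs absV" and V_sc: "sph_complete absV"
    and V_imm: "immediate_ext absK absV \<iota>"
    and E_vs: "vector_space smul" and E_norm: "nonarch_norm absK smul nE"
    and E_complete: "complete_wrt nE"
    and a_inj: "inj_on a {..<m}"
    and X_max: "max_orthogonal_set smul nE (a ` {..<m})"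
  shows "\<exists>T :: 'e \<Rightarrow> nat \<Rightarrow> 'v.
           (\<forall>x y. T (x + y) = (\<lambda>i. T x i + T y i)) \<and>
           (\<forall>c x. T (smul c x) = (\<lambda>i. \<iota> c * T x i)) \<and>
           (\<forall>x i. m \<le> i \<longrightarrow> T x i = 0) \<and>
           (\<forall>x. prod_norm absV (\<lambda>i. nE (a i)) m (T x) = nE x) \<and>
           (\<forall>i<m. T (a i) = (\<lambda>j. if j = i then 1 else 0))"
proof -
  have "\<forall>x y. \<iota> (x + y) = \<iota> x + \<iota> y" "\<forall>x y. \<iota> (x * y) = \<iota> x * \<iota> y" "\<iota> 1 = 1"
    "\<forall>x. absV (\<iota> x) = absK x"
    using V_imm unfolding immediate_ext_def by auto
  then interpret basis_isometry smul absK nE absV \<iota> a m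
    by (intro basis_isometry.intro nonarch_space.intro basis_isometry_axioms.intro
        nonarch_space_axioms.intro E_vs K_abs E_norm V_abs V_sc a_inj X_max) simp_all
  show ?thesis
    using exists_basis_isometry unfolding plus_fun_def .
qed

end
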